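(* Let $n\ge1$ and $\vec p,\vec q\in[0,1]^n$. Let $I=\{i\in\{1,\dots,n\}:p_i\ge q_i\}$ and $J=\{1,\dots,n\}\setminus I$, and let $\vec p_I,\vec p_J,\vec q_I,\vec q_J$ be the corresponding subsequences of $\vec p,\vec q$. Then $$\mathrm{TV}(\mathrm{Ber}(\vec p),\mathrm{Ber}(\vec q))\ge\max\big(\mathrm{TV}(\mathrm{Ber}(\vec p_I),\mathrm{Ber}(\vec q_I)),\ \mathrm{TV}(\mathrm{Ber}(\vec p_J),\mathrm{Ber}(\vec q_J))\big)\ge\frac1{12}\max\big(\Phi(\vec p_I,\vec q_I),\Phi(\vec q_J,\vec p_J)\big).$$
   Context: For $\vec r=(r_1,\dots,r_m)\in[0,1]^m$, $\mathrm{Ber}(\vec r)=\mathrm{Ber}(r_1)\otimes\cdots\otimes\mathrm{Ber}(r_m)$ is the product Bernoulli measure on $\{0,1\}^m$. $\mathrm{TV}(P,Q)=\frac12\sum_\omega|P(\omega)-Q(\omega)|$ is the total variation distance. For $\vec a,\vec b\in[0,1]^m$, $\Phi(\vec a,\vec b)=\min\big(1,\Delta/\sqrt{\sigma_{\vec a}^2+1}\big)$ where $\Delta=\sum_{i}|a_i-b_i|$ and $\sigma_{\vec a}^2=\sum_i a_i(1-a_i)$. If $I$ or $J$ is empty, the corresponding TV and $\Phi$ terms are $0$. *)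

theory Defs
  imports "HOL-Analysis.Analysis"
begin

text \<open>A vector r in [0,1]^S is modelled as a function r :: nat => real on a finite
index set S. An outcome omega in {0,1}^S is represented by the set A \<subseteq> S of
coordinates equal to 1. Ber(r) assigns mass prod_{i in S} (r i if i in A else 1 - r i).\<close>

definition ber :: "nat set \<Rightarrow> (nat \<Rightarrow> real) \<Rightarrow> nat set \<Rightarrow> real" where
  "ber S r A = (\<Prod>i\<in>S. if i \<in> A then r i else 1 - r i)"

definition tv_ber :: "nat set \<Rightarrow> (nat \<Rightarrow> real) \<Rightarrow> (nat \<Rightarrow> real) \<Rightarrow> real" where
  "tv_ber S p q = (1/2) * (\<Sum>A\<in>Pow S. \<bar>ber S p A - ber S q A\<bar>)"

definition Phi :: "nat set \<Rightarrow> (nat \<Rightarrow> real) \<Rightarrow> (nat \<Rightarrow> real) \<Rightarrow> real" where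
  "Phi S a b = (if S = {} then 0 else
     min 1 ((\<Sum>i\<in>S. \<bar>a i - b i\<bar>) / sqrt ((\<Sum>i\<in>S. a i * (1 - a i)) + 1)))"

end

(* Restricting to a subset of the coordinates is a marginalisation, which cannot increase
   the total variation distance.  For the lower bound, let a \<ge> b coordinatewise and test
   Ber(a) and Ber(b) against g(A) = ramp(|A|), a function clipped to [0,1] that is linear of
   slope 1/L on a window of length L.  Replacing b_k by a_k one coordinate at a time changes
   E g by (a_k - b_k) times the expected increment of the ramp at |B|, where B follows a
   hybrid law; by Chebyshev's inequality |B| stays in the linear window with probability at
   least 3/4.  Summing over k gives TV \<ge> E_a g - E_b g \<ge> (3/4) D / L with
   D = \<Sum>(a_i - b_i) and L = D + 4 sqrt(\<sigma>\<^sup>2 + D + 1) + 2, which is at least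
   min(1, D / sqrt(\<sigma>\<^sup>2 + 1)) / 12. *)

theory Submission
  imports Defs
begin

definition ber_expect :: "nat set \<Rightarrow> (nat \<Rightarrow> real) \<Rightarrow> (nat set \<Rightarrow> real) \<Rightarrow> real" where
  "ber_expect S r f = (\<Sum>A\<in>Pow S. ber S r A * f A)"

lemma ber_cong: "(\<And>i. i \<in> S \<Longrightarrow> r i = r' i) \<Longrightarrow> ber S r A = ber S r' A"
  unfolding ber_def by (rule prod.cong) auto

lemma ber_expect_cong:
  assumes "\<And>i. i \<in> S \<Longrightarrow> r i = r' i"
  shows "ber_expect S r f = ber_expect S r' f"
  unfolding ber_expect_def using ber_cong[OF assms] by simp

lemma ber_nonneg: "(\<And>i. i \<in> S \<Longrightarrow> 0 \<le> r i \<and> r i \<le> 1) \<Longrightarrow> 0 \<le> ber S r A"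
  unfolding ber_def by (rule prod_nonneg) auto

lemma sum_Pow_remove:
  assumes "finite S" "j \<in> S"
  shows "(\<Sum>A\<in>Pow S. F A) = (\<Sum>B\<in>Pow (S - {j}). F B + F (insert j B))"
proof -
  have "Pow S = Pow (S - {j}) \<union> insert j ` Pow (S - {j})"
    using assms Pow_insert insert_Diff by metis
  moreover have "inj_on (insert j) (Pow (S - {j}))"
    by (rule inj_onI) (metis Diff_insert_absorb PowD subset_Diff_insert)
  moreover have "Pow (S - {j}) \<inter> insert j ` Pow (S - {j}) = {}"
    by auto
  ultimately show ?thesis
    using assms by (simp add: sum.union_disjoint sum.reindex sum.distrib)
qed

lemma ber_remove:
  assumes "finite S" "j \<in> S" "j \<notin> B"
  shows "ber S r B = (1 - r j) * ber (S - {j}) r B"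
  using assms unfolding ber_def by (simp add: prod.remove)

lemma ber_insert_remove:
  assumes "finite S" "j \<in> S"
  shows "ber S r (insert j B) = r j * ber (S - {j}) r B"
proof -
  have "ber S r (insert j B) = r j * (\<Prod>i\<in>S - {j}. if i \<in> insert j B then r i else 1 - r i)"
    unfolding ber_def using assms by (simp add: prod.remove)
  also have "(\<Prod>i\<in>S - {j}. if i \<in> insert j B then r i else 1 - r i) = ber (S - {j}) r B"
    unfolding ber_def by (rule prod.cong) auto
  finally show ?thesis .
qed

lemma ber_expect_remove:
  assumes "finite S" "j \<in> S"
  shows "ber_expect S r f = ber_expect (S - {j}) r (\<lambda>B. (1 - r j) * f B + r j * f (insert j B))"
  unfolding ber_expect_def sum_Pow_remove[OF assms]
proof (rule sum.cong[OF refl])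
  fix B assume "B \<in> Pow (S - {j})"
  then have "j \<notin> B" by auto
  then show "ber S r B * f B + ber S r (insert j B) * f (insert j B)
      = ber (S - {j}) r B * ((1 - r j) * f B + r j * f (insert j B))"
    using assms by (simp add: ber_remove ber_insert_remove algebra_simps)
qed

lemma sum_ber:
  assumes "finite S"
  shows "(\<Sum>A\<in>Pow S. ber S r A) = 1"
  using assms
proof (induction S rule: finite_induct)
  case empty
  show ?case by (simp add: ber_def)
next
  case (insert x F)
  have "(\<Sum>A\<in>Pow (insert x F). ber (insert x F) r A) = ber_expect (insert x F) r (\<lambda>_. 1)"
    by (simp add: ber_expect_def)
  also have "\<dots> = ber_expect F r (\<lambda>_. 1)"
    using ber_expect_remove[of "insert x F" x r "\<lambda>_. 1"] insert by simp
  finally show ?case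
    using insert by (simp add: ber_expect_def)
qed

lemma ber_expect_affine:
  assumes "finite S"
  shows "ber_expect S r (\<lambda>A. c + d * f A) = c + d * ber_expect S r f"
proof -
  have "(\<Sum>A\<in>Pow S. ber S r A * (c + d * f A))
      = c * (\<Sum>A\<in>Pow S. ber S r A) + d * (\<Sum>A\<in>Pow S. ber S r A * f A)"
    by (simp add: sum.distrib sum_distrib_left algebra_simps)
  then show ?thesis
    using sum_ber[OF assms] by (simp add: ber_expect_def)
qed

lemma ber_expect_card_variance:
  fixes r :: "nat \<Rightarrow> real"
  assumes "finite S"
  shows "ber_expect S r (\<lambda>A. (card A - (\<Sum>i\<in>S. r i))\<^sup>2) = (\<Sum>i\<in>S. r i * (1 - r i))"
  using assms
proof (induction S rule: finite_induct)
  case empty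
  show ?case by (simp add: ber_def ber_expect_def)
next
  case (insert x F)
  let ?\<mu> = "\<Sum>i\<in>F. r i"
  have "ber_expect (insert x F) r (\<lambda>A. (card A - (\<Sum>i\<in>insert x F. r i))\<^sup>2)
     = ber_expect F r (\<lambda>B. (1 - r x) * (card B - (r x + ?\<mu>))\<^sup>2
          + r x * (card (insert x B) - (r x + ?\<mu>))\<^sup>2)"
    using ber_expect_remove[of "insert x F" x r] insert by simp
  also have "\<dots> = ber_expect F r (\<lambda>B. (card B - ?\<mu>)\<^sup>2 + r x * (1 - r x))"
    unfolding ber_expect_def
  proof (intro sum.cong refl arg_cong2[where f = "(*)"])
    fix B assume "B \<in> Pow F"
    then have "finite B" "x \<notin> B"
      using insert finite_subset by auto
    then have "card (insert x B) = card B + 1"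
      by simp
    then show "(1 - r x) * (card B - (r x + ?\<mu>))\<^sup>2 + r x * (card (insert x B) - (r x + ?\<mu>))\<^sup>2
        = (card B - ?\<mu>)\<^sup>2 + r x * (1 - r x)"
      by (simp add: power2_eq_square algebra_simps)
  qed
  also have "\<dots> = (\<Sum>i\<in>F. r i * (1 - r i)) + r x * (1 - r x)"
    using insert sum_ber[OF insert(1), of r]
    by (simp add: ber_expect_def distrib_left sum.distrib flip: sum_distrib_right)
  finally show ?case
    using insert by simp
qed

lemma tv_ber_commute: "tv_ber S p q = tv_ber S q p"
  unfolding tv_ber_def by (simp add: abs_minus_commute)

lemma tv_ber_nonneg: "0 \<le> tv_ber S p q"
  unfolding tv_ber_def by (simp add: sum_nonneg)

lemma ber_expect_diff_le_tv_ber: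
  assumes "finite S" "\<And>A. A \<subseteq> S \<Longrightarrow> 0 \<le> g A \<and> g A \<le> 1"
  shows "ber_expect S p g - ber_expect S q g \<le> tv_ber S p q"
proof -
  \<comment> \<open>Both measures have mass 1, so g may be replaced by g - 1/2, which is bounded by 1/2.\<close>
  have "ber_expect S p g - ber_expect S q g
      = (\<Sum>A\<in>Pow S. (ber S p A - ber S q A) * (g A - 1/2))"
    using sum_ber[OF assms(1), of p] sum_ber[OF assms(1), of q]
    by (simp add: ber_expect_def algebra_simps sum.distrib sum_subtractf flip: sum_divide_distrib)
  also have "\<dots> \<le> (\<Sum>A\<in>Pow S. \<bar>ber S p A - ber S q A\<bar> * (1/2))"
  proof (rule sum_mono)
    fix A assume "A \<in> Pow S"
    then have "0 \<le> g A \<and> g A \<le> 1"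
      using assms(2) by auto
    then have "\<bar>g A - 1/2\<bar> \<le> 1/2"
      unfolding abs_le_iff by linarith
    then have "\<bar>(ber S p A - ber S q A) * (g A - 1/2)\<bar> \<le> \<bar>ber S p A - ber S q A\<bar> * (1/2)"
      unfolding abs_mult by (rule mult_left_mono) simp
    then show "(ber S p A - ber S q A) * (g A - 1/2) \<le> \<bar>ber S p A - ber S q A\<bar> * (1/2)"
      by linarith
  qed
  also have "\<dots> = tv_ber S p q"
    unfolding tv_ber_def by (simp add: sum_divide_distrib)
  finally show ?thesis .
qed

lemma tv_ber_remove_le:
  assumes "finite S" "j \<in> S"
  shows "tv_ber (S - {j}) p q \<le> tv_ber S p q"
proof -
  let ?T = "S - {j}"
  have "(\<Sum>B\<in>Pow ?T. \<bar>ber ?T p B - ber ?T q B\<bar>)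
      \<le> (\<Sum>B\<in>Pow ?T. \<bar>(1 - p j) * ber ?T p B - (1 - q j) * ber ?T q B\<bar>
                     + \<bar>p j * ber ?T p B - q j * ber ?T q B\<bar>)"
  proof (rule sum_mono)
    fix B
    have "ber ?T p B - ber ?T q B
        = ((1 - p j) * ber ?T p B - (1 - q j) * ber ?T q B) + (p j * ber ?T p B - q j * ber ?T q B)"
      by (simp add: algebra_simps)
    then show "\<bar>ber ?T p B - ber ?T q B\<bar> \<le> \<bar>(1 - p j) * ber ?T p B - (1 - q j) * ber ?T q B\<bar>
                     + \<bar>p j * ber ?T p B - q j * ber ?T q B\<bar>"
      by (metis abs_triangle_ineq)
  qed
  also have "\<dots> = (\<Sum>A\<in>Pow S. \<bar>ber S p A - ber S q A\<bar>)"
    unfolding sum_Pow_remove[OF assms]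
    using assms by (intro sum.cong refl) (auto simp: ber_remove ber_insert_remove subset_Diff_insert)
  finally show ?thesis
    unfolding tv_ber_def by simp
qed

lemma tv_ber_mono:
  assumes "finite S" "T \<subseteq> S"
  shows "tv_ber T p q \<le> tv_ber S p q"
proof -
  have "tv_ber T p q \<le> tv_ber (T \<union> D) p q" if "finite D" "D \<inter> T = {}" for D
    using that
  proof (induction D rule: finite_induct)
    case (insert x D)
    have "tv_ber T p q \<le> tv_ber (T \<union> D) p q"
      using insert by simp
    also have "\<dots> = tv_ber (insert x (T \<union> D) - {x}) p q"
      using insert by (metis Diff_insert_absorb Un_iff disjoint_iff insertI1)
    also have "\<dots> \<le> tv_ber (insert x (T \<union> D)) p q"
      using assms insert finite_subset by (intro tv_ber_remove_le) auto
    finally show ?case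
      by simp
  qed simp
  from this[of "S - T"] show ?thesis
    using assms finite_subset by (simp add: Un_absorb1 Diff_partition Int_commute)
qed

definition hybrid :: "nat \<Rightarrow> (nat \<Rightarrow> real) \<Rightarrow> (nat \<Rightarrow> real) \<Rightarrow> nat \<Rightarrow> real" where
  "hybrid k a b i = (if i < k then a i else b i)"

lemma ber_expect_hybrid_step:
  assumes "finite S"
  shows "ber_expect S (hybrid (Suc k) a b) g - ber_expect S (hybrid k a b) g
    = (if k \<in> S then (a k - b k) * ber_expect (S - {k}) (hybrid k a b) (\<lambda>B. g (insert k B) - g B)
       else 0)"
proof (cases "k \<in> S")
  case True
  have ber_eq: "ber (S - {k}) (hybrid (Suc k) a b) B = ber (S - {k}) (hybrid k a b) B" for B
    by (rule ber_cong) (auto simp: hybrid_def)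
  have "hybrid (Suc k) a b k = a k" "hybrid k a b k = b k"
    by (simp_all add: hybrid_def)
  then show ?thesis
    unfolding if_P[OF True] ber_expect_remove[OF assms True]
    unfolding ber_expect_def ber_eq
    unfolding sum_distrib_left sum_subtractf[symmetric]
    by (intro sum.cong refl) (simp add: algebra_simps)
next
  case False
  then have "ber_expect S (hybrid (Suc k) a b) g = ber_expect S (hybrid k a b) g"
    by (intro ber_expect_cong) (auto simp: hybrid_def less_Suc_eq)
  then show ?thesis
    using False by simp
qed

lemma ber_expect_diff_hybrid:
  assumes "finite S"
  shows "ber_expect S a g - ber_expect S b g
    = (\<Sum>k\<in>S. (a k - b k) * ber_expect (S - {k}) (hybrid k a b) (\<lambda>B. g (insert k B) - g B))"
proof -
  obtain N where N: "S \<subseteq> {..<N}"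
    using assms finite_nat_bounded by blast
  have "ber_expect S a g = ber_expect S (hybrid N a b) g"
    using N by (intro ber_expect_cong) (auto simp: hybrid_def)
  moreover have "ber_expect S b g = ber_expect S (hybrid 0 a b) g"
    by (intro ber_expect_cong) (simp add: hybrid_def)
  ultimately have "ber_expect S a g - ber_expect S b g
      = (\<Sum>k<N. ber_expect S (hybrid (Suc k) a b) g - ber_expect S (hybrid k a b) g)"
    using sum_lessThan_telescope[of "\<lambda>k. ber_expect S (hybrid k a b) g" N] by simp
  also have "\<dots> = (\<Sum>k\<in>{..<N} \<inter> S.
      (a k - b k) * ber_expect (S - {k}) (hybrid k a b) (\<lambda>B. g (insert k B) - g B))"
    unfolding ber_expect_hybrid_step[OF assms] by (simp add: sum.inter_restrict)
  also have "{..<N} \<inter> S = S"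
    using N by blast
  finally show ?thesis .
qed

definition ramp :: "real \<Rightarrow> real \<Rightarrow> real \<Rightarrow> real" where
  "ramp m L x = max 0 (min 1 ((x - m) / L))"

lemma ramp_bounds: "0 \<le> ramp m L x \<and> ramp m L x \<le> 1"
  unfolding ramp_def by simp

lemma ramp_mono:
  assumes "0 < L" "x \<le> y"
  shows "ramp m L x \<le> ramp m L y"
proof -
  have "(x - m) / L \<le> (y - m) / L"
    using assms by (simp add: divide_right_mono)
  then show ?thesis
    unfolding ramp_def by simp
qed

text \<open>The quadratic lower bound stands in for the indicator of \<open>\<bar>x - \<mu>\<bar> < K\<close>, on which the
  ramp has slope 1/L; averaging it gives Chebyshev's inequality.\<close>
lemma ramp_increment_ge:
  assumes "0 < L" "0 < K" "m + K \<le> \<mu>" "\<mu> + K + 1 \<le> m + L"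
  shows "(1 - (x - \<mu>)\<^sup>2 / K\<^sup>2) / L \<le> ramp m L (x + 1) - ramp m L x"
proof (cases "\<bar>x - \<mu>\<bar> < K")
  case True
  then have "0 \<le> (x - m) / L" "(x + 1 - m) / L \<le> 1"
    using assms by (auto simp: field_simps)
  then have "ramp m L x = (x - m) / L" "ramp m L (x + 1) = (x + 1 - m) / L"
    using assms by (auto simp: ramp_def field_simps)
  then have "ramp m L (x + 1) - ramp m L x = 1 / L"
    using assms(1) by (simp add: field_simps)
  moreover have "1 - (x - \<mu>)\<^sup>2 / K\<^sup>2 \<le> 1"
    by simp
  ultimately show ?thesis
    using assms(1) by (metis divide_right_mono less_eq_real_def)
next
  case False
  then have "K\<^sup>2 \<le> (x - \<mu>)\<^sup>2"
    using assms(2) by (simp add: abs_le_square_iff[symmetric])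
  then have "(1 - (x - \<mu>)\<^sup>2 / K\<^sup>2) / L \<le> 0"
    using assms(1,2) by (simp add: divide_nonpos_pos le_divide_eq)
  also have "0 \<le> ramp m L (x + 1) - ramp m L x"
    using ramp_mono[OF assms(1)] by simp
  finally show ?thesis .
qed

lemma ber_expect_ramp_increment_ge:
  fixes r :: "nat \<Rightarrow> real"
  assumes "finite T" "k \<notin> T" "\<And>i. i \<in> T \<Longrightarrow> 0 \<le> r i \<and> r i \<le> 1"
    and "0 < L" "0 < K" "m + K \<le> (\<Sum>i\<in>T. r i)" "(\<Sum>i\<in>T. r i) + K + 1 \<le> m + L"
  shows "(1 - (\<Sum>i\<in>T. r i * (1 - r i)) / K\<^sup>2) / L
    \<le> ber_expect T r (\<lambda>B. ramp m L (card (insert k B)) - ramp m L (card B))"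
proof -
  let ?\<mu> = "\<Sum>i\<in>T. r i"
  have affine: "(1 - y / K\<^sup>2) / L = 1 / L + (- 1 / (L * K\<^sup>2)) * y" for y
    using assms(4,5) by (simp add: field_simps)
  have "(1 - (\<Sum>i\<in>T. r i * (1 - r i)) / K\<^sup>2) / L
      = ber_expect T r (\<lambda>B. (1 - (card B - ?\<mu>)\<^sup>2 / K\<^sup>2) / L)"
    unfolding affine ber_expect_affine[OF assms(1)] ber_expect_card_variance[OF assms(1)] ..
  also have "\<dots> \<le> ber_expect T r (\<lambda>B. ramp m L (card (insert k B)) - ramp m L (card B))"
    unfolding ber_expect_def
  proof (intro sum_mono mult_left_mono)
    fix B assume "B \<in> Pow T"
    then have "finite B" "k \<notin> B"
      using assms(1,2) finite_subset by auto
    then have "real (card (insert k B)) = real (card B) + 1"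
      by simp
    then show "(1 - (card B - ?\<mu>)\<^sup>2 / K\<^sup>2) / L \<le> ramp m L (card (insert k B)) - ramp m L (card B)"
      using ramp_increment_ge[OF assms(4-7)] by presburger
    show "0 \<le> ber T r B"
      using assms(3) by (rule ber_nonneg)
  qed
  finally show ?thesis .
qed

lemma bernoulli_variance_le:
  fixes a b r :: real
  assumes "b \<le> r" "r \<le> a" "a \<le> 1"
  shows "r * (1 - r) \<le> a * (1 - a) + (a - b)"
proof -
  have "r * (1 - r) - a * (1 - a) = (a - r) * (a + r - 1)"
    by (simp add: algebra_simps)
  also have "\<dots> \<le> a - r"
    using assms by (intro mult_left_le) auto
  finally show ?thesis
    using assms(1) by linarith
qed

lemma ber_expect_hybrid_ramp_increment_ge:
  assumes "finite S" "k \<in> S" and ab: "\<And>i. i \<in> S \<Longrightarrow> 0 \<le> b i \<and> b i \<le> a i \<and> a i \<le> 1"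
    and "0 < L" "0 < K" "4 * (\<Sum>i\<in>S. a i * (1 - a i) + (a i - b i)) \<le> K\<^sup>2"
    and "m + K + 1 \<le> (\<Sum>i\<in>S. b i)" "(\<Sum>i\<in>S. a i) + K + 1 \<le> m + L"
  shows "3 / (4 * L)
    \<le> ber_expect (S - {k}) (hybrid k a b) (\<lambda>B. ramp m L (card (insert k B)) - ramp m L (card B))"
proof -
  let ?T = "S - {k}" and ?r = "hybrid k a b"
  have r_between: "b i \<le> ?r i \<and> ?r i \<le> a i" if "i \<in> S" for i
    using ab[OF that] by (simp add: hybrid_def)
  have r01: "0 \<le> ?r i \<and> ?r i \<le> 1" if "i \<in> S" for i
    using ab[OF that] r_between[OF that] by linarith
  have sum_S: "(\<Sum>i\<in>S. f i) = f k + (\<Sum>i\<in>?T. f i)" for f :: "nat \<Rightarrow> real"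
    using assms(1,2) by (simp add: sum.remove)
  have "(\<Sum>i\<in>?T. ?r i * (1 - ?r i)) \<le> (\<Sum>i\<in>S. ?r i * (1 - ?r i))"
    unfolding sum_S[of "\<lambda>i. ?r i * (1 - ?r i)"] using r01[OF assms(2)] by simp
  also have "\<dots> \<le> (\<Sum>i\<in>S. a i * (1 - a i) + (a i - b i))"
    using ab r_between by (intro sum_mono bernoulli_variance_le) auto
  finally have "(\<Sum>i\<in>?T. ?r i * (1 - ?r i)) / K\<^sup>2 \<le> 1 / 4"
    using assms(5,6) by (simp add: field_simps)
  then have "3 / (4 * L) \<le> (1 - (\<Sum>i\<in>?T. ?r i * (1 - ?r i)) / K\<^sup>2) / L"
    using assms(4) by (simp add: field_simps)
  also have "\<dots> \<le> ber_expect ?T ?r (\<lambda>B. ramp m L (card (insert k B)) - ramp m L (card B))"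
  proof (rule ber_expect_ramp_increment_ge)
    have "(\<Sum>i\<in>S. b i) \<le> (\<Sum>i\<in>S. ?r i)" "(\<Sum>i\<in>S. ?r i) \<le> (\<Sum>i\<in>S. a i)"
      using r_between by (auto intro: sum_mono)
    then show "m + K \<le> (\<Sum>i\<in>?T. ?r i)" "(\<Sum>i\<in>?T. ?r i) + K + 1 \<le> m + L"
      unfolding sum_S[of ?r] using r01[OF assms(2)] assms(7,8) by linarith+
  qed (use assms(1,4,5) r01 in auto)
  finally show ?thesis .
qed

lemma tv_ber_ge_ramp_bound:
  assumes "finite S" and ab: "\<And>i. i \<in> S \<Longrightarrow> 0 \<le> b i \<and> b i \<le> a i \<and> a i \<le> 1"
  defines "D \<equiv> \<Sum>i\<in>S. a i - b i"
    and "s \<equiv> \<Sum>i\<in>S. a i * (1 - a i)"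
  shows "(3/4) * D / (D + 4 * sqrt (s + D + 1) + 2) \<le> tv_ber S a b"
proof -
  define K where "K = 2 * sqrt (s + D + 1)"
  define L where "L = D + 2 * K + 2"
  define m where "m = (\<Sum>i\<in>S. b i) - 1 - K"
  have "0 \<le> D"
    unfolding D_def using ab by (intro sum_nonneg) auto
  moreover have "0 \<le> s"
    unfolding s_def using ab by (intro sum_nonneg mult_nonneg_nonneg) (auto intro: order_trans)
  ultimately have "0 < sqrt (s + D + 1)"
    by simp
  then have "0 < K" "0 < L"
    unfolding L_def K_def using \<open>0 \<le> D\<close> by linarith+
  have increment: "3 / (4 * L)
      \<le> ber_expect (S - {k}) (hybrid k a b) (\<lambda>B. ramp m L (card (insert k B)) - ramp m L (card B))"
    if "k \<in> S" for k
  proof (rule ber_expect_hybrid_ramp_increment_ge[OF assms(1) that ab])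
    have "(\<Sum>i\<in>S. a i * (1 - a i) + (a i - b i)) = s + D"
      unfolding s_def D_def by (simp add: sum.distrib)
    then show "4 * (\<Sum>i\<in>S. a i * (1 - a i) + (a i - b i)) \<le> K\<^sup>2"
      unfolding K_def using \<open>0 \<le> D\<close> \<open>0 \<le> s\<close> by (simp add: power_mult_distrib)
    have "(\<Sum>i\<in>S. a i) = (\<Sum>i\<in>S. b i) + D"
      unfolding D_def by (simp add: sum_subtractf)
    then show "(\<Sum>i\<in>S. a i) + K + 1 \<le> m + L"
      unfolding m_def L_def by simp
  qed (use \<open>0 < K\<close> \<open>0 < L\<close> in \<open>auto simp: m_def\<close>)
  have "(3/4) * D / L = (\<Sum>k\<in>S. (a k - b k) * (3 / (4 * L)))"
    unfolding D_def sum_distrib_right[symmetric] by simp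
  also have "\<dots> \<le> (\<Sum>k\<in>S. (a k - b k)
      * ber_expect (S - {k}) (hybrid k a b) (\<lambda>B. ramp m L (card (insert k B)) - ramp m L (card B)))"
    using ab increment by (intro sum_mono mult_left_mono) auto
  also have "\<dots> = ber_expect S a (\<lambda>A. ramp m L (card A)) - ber_expect S b (\<lambda>A. ramp m L (card A))"
    by (rule ber_expect_diff_hybrid[OF assms(1), symmetric])
  also have "\<dots> \<le> tv_ber S a b"
    using assms(1) ramp_bounds by (rule ber_expect_diff_le_tv_ber)
  finally show ?thesis
    unfolding L_def K_def by simp
qed

lemma min_ratio_le_ramp_bound:
  fixes D s :: real
  assumes "0 \<le> D" "0 \<le> s"
  shows "min 1 (D / sqrt (s + 1)) / 12 \<le> (3/4) * D / (D + 4 * sqrt (s + D + 1) + 2)"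
proof -
  define \<sigma> where "\<sigma> = sqrt (s + 1)"
  define x where "x = max \<sigma> D"
  have "1 \<le> \<sigma>"
    unfolding \<sigma>_def using assms by simp
  then have "1 \<le> x" "\<sigma> \<le> x" "D \<le> x"
    unfolding x_def by auto
  have "s + D + 1 \<le> x\<^sup>2 + x"
    using \<open>\<sigma> \<le> x\<close> \<open>D \<le> x\<close> \<open>1 \<le> \<sigma>\<close> assms(2) power_mono[of \<sigma> x 2]
    unfolding \<sigma>_def by simp
  also have "\<dots> \<le> (2 * x - 1/2)\<^sup>2"
  proof -
    have "(2 * x - 1/2)\<^sup>2 - (x\<^sup>2 + x) = 3 * (x * (x - 1)) + 1/4"
      by (simp add: power2_eq_square algebra_simps)
    moreover have "0 \<le> x * (x - 1)"
      using \<open>1 \<le> x\<close> by simp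
    ultimately show ?thesis
      by linarith
  qed
  finally have "sqrt (s + D + 1) \<le> 2 * x - 1/2"
    using \<open>1 \<le> x\<close> by (intro real_le_lsqrt) auto
  then have "D + 4 * sqrt (s + D + 1) + 2 \<le> 9 * x"
    using \<open>D \<le> x\<close> by linarith
  then have "(3/4) * D / (9 * x) \<le> (3/4) * D / (D + 4 * sqrt (s + D + 1) + 2)"
    using assms \<open>1 \<le> x\<close> by (intro divide_left_mono mult_pos_pos add_nonneg_pos) auto
  moreover have "min 1 (D / \<sigma>) \<le> D / x"
    using \<open>1 \<le> \<sigma>\<close> assms(1) by (cases "D \<le> \<sigma>") (auto simp: x_def)
  ultimately show ?thesis
    unfolding \<sigma>_def by simp
qed

lemma tv_ber_ge_Phi:
  assumes "finite S" and ab: "\<And>i. i \<in> S \<Longrightarrow> 0 \<le> b i \<and> b i \<le> a i \<and> a i \<le> 1"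
  shows "Phi S a b / 12 \<le> tv_ber S a b"
proof (cases "S = {}")
  case True
  then show ?thesis
    by (simp add: Phi_def tv_ber_nonneg)
next
  case False
  define D where "D = (\<Sum>i\<in>S. a i - b i)"
  define s where "s = (\<Sum>i\<in>S. a i * (1 - a i))"
  have "0 \<le> D"
    unfolding D_def using ab by (intro sum_nonneg) auto
  have "0 \<le> s"
    unfolding s_def using ab by (intro sum_nonneg mult_nonneg_nonneg) (auto intro: order_trans)
  have "(\<Sum>i\<in>S. \<bar>a i - b i\<bar>) = D"
    unfolding D_def using ab by (intro sum.cong) auto
  then have "Phi S a b = min 1 (D / sqrt (s + 1))"
    unfolding Phi_def s_def using False by simp
  also have "\<dots> / 12 \<le> (3/4) * D / (D + 4 * sqrt (s + D + 1) + 2)"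
    using \<open>0 \<le> D\<close> \<open>0 \<le> s\<close> by (rule min_ratio_le_ramp_bound)
  also have "\<dots> \<le> tv_ber S a b"
    unfolding D_def s_def by (rule tv_ber_ge_ramp_bound[OF assms])
  finally show ?thesis .
qed

theorem theorem3:
  fixes n :: nat and p q :: "nat \<Rightarrow> real"
  assumes "n \<ge> 1"
    and "\<forall>i\<in>{1..n}. 0 \<le> p i \<and> p i \<le> 1"
    and "\<forall>i\<in>{1..n}. 0 \<le> q i \<and> q i \<le> 1"
  defines "I \<equiv> {i\<in>{1..n}. p i \<ge> q i}"
    and "J \<equiv> {1..n} - {i\<in>{1..n}. p i \<ge> q i}"
  shows "tv_ber {1..n} p q \<ge> max (tv_ber I p q) (tv_ber J p q)
     \<and> max (tv_ber I p q) (tv_ber J p q) \<ge> (1/12) * max (Phi I p q) (Phi J q p)"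
proof -
  have "I \<subseteq> {1..n}" "J \<subseteq> {1..n}"
    unfolding I_def J_def by auto
  then have "finite I" "finite J"
    by (auto intro: finite_subset)
  have "tv_ber I p q \<le> tv_ber {1..n} p q" "tv_ber J p q \<le> tv_ber {1..n} p q"
    using \<open>I \<subseteq> {1..n}\<close> \<open>J \<subseteq> {1..n}\<close> by (simp_all add: tv_ber_mono)
  moreover have "Phi I p q / 12 \<le> tv_ber I p q"
    using assms(2,3) by (intro tv_ber_ge_Phi \<open>finite I\<close>) (auto simp: I_def)
  moreover have "Phi J q p / 12 \<le> tv_ber J p q"
    unfolding tv_ber_commute[of J p q]
    using assms(2,3) by (intro tv_ber_ge_Phi \<open>finite J\<close>) (auto simp: J_def)
  ultimately show ?thesis
    by (auto simp: max_def)
qed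

end
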